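(* Let $E(u,v)=\sum_{p\geq0,q\geq1}E_{p,q}(t)u^pv^q$, where $E_{p,q}(t)=\sum_{n\geq1}|\{e\in\mathbf{I}_n(\geq,\geq,-): e\text{ has parameters }(p,q)\}|\,t^n$. Then $$\Bigl(1+\frac{tv}{1-u}+\frac{tv}{1-v/u}\Bigr)E(u,v)=tuv+\frac{tv}{1-u}E(1,v)+\frac{tv}{1-v/u}E(u,u).$$
   Context: $\mathbf{I}_n$ is the set of inversion sequences $e=(e_1,\ldots,e_n)$ with $0\leq e_i<i$; $\mathbf{I}_n(\geq,\geq,-)$ is the set of $e\in\mathbf{I}_n$ with no $i<j<k$ such that $e_i\geq e_j\geq e_k$. An entry $e_i$ is a left-to-right maximum if $e_i>e_j$ for all $j<i$. Let $\alpha(e)=\max_i e_i$ and $\beta(e)$ the largest element of $\{e_i: e_i\text{ not a left-to-right maximum}\}\cup\{-1\}$. The parameters of $e\in\mathbf{I}_n(\geq,\geq,-)$ are $(p,q)=(\alpha(e)-\beta(e),\,n-\alpha(e))$. $E(u,v)$ is a formal power series in $t$ whose coefficients are polynomials in $u,v$. *)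

theory Defs
  imports "HOL-Computational_Algebra.Polynomial" "HOL-Computational_Algebra.Fraction_Field"
          "HOL-Computational_Algebra.Formal_Power_Series"
begin

text \<open>Inversion sequences e = (e_1,...,e_n), represented as functions nat => nat,
  with e_i < i for 1 <= i <= n and e_i = 0 outside {1..n} (canonical representative).\<close>
definition inv_seqs :: "nat \<Rightarrow> (nat \<Rightarrow> nat) set" where
  "inv_seqs n = {e. (\<forall>i\<in>{1..n}. e i < i) \<and> (\<forall>i. i \<notin> {1..n} \<longrightarrow> e i = 0)}"

definition avoid_geq_geq :: "nat \<Rightarrow> (nat \<Rightarrow> nat) set" where
  "avoid_geq_geq n = {e \<in> inv_seqs n.
      \<not> (\<exists>i j k. 1 \<le> i \<and> i < j \<and> j < k \<and> k \<le> n \<and> e i \<ge> e j \<and> e j \<ge> e k)}"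

definition is_ltr_max :: "(nat \<Rightarrow> nat) \<Rightarrow> nat \<Rightarrow> bool" where
  "is_ltr_max e i \<longleftrightarrow> (\<forall>j\<in>{1..<i}. e i > e j)"

definition alpha :: "nat \<Rightarrow> (nat \<Rightarrow> nat) \<Rightarrow> int" where
  "alpha n e = Max (int ` e ` {1..n})"

definition beta :: "nat \<Rightarrow> (nat \<Rightarrow> nat) \<Rightarrow> int" where
  "beta n e = Max ({int (e i) | i. i \<in> {1..n} \<and> \<not> is_ltr_max e i} \<union> {-1})"

definition params :: "nat \<Rightarrow> (nat \<Rightarrow> nat) \<Rightarrow> int \<times> int" where
  "params n e = (alpha n e - beta n e, int n - alpha n e)"

definition cnt :: "nat \<Rightarrow> nat \<Rightarrow> nat \<Rightarrow> nat" where
  "cnt n p q = card {e \<in> avoid_geq_geq n. params n e = (int p, int q)}"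

text \<open>Bivariate polynomials in u,v: type int poly poly, outer variable v, inner variable u;
  monom (monom 1 p) q represents u^p v^q. For n >= 1 every e in I_n has 0 <= p <= n and
  1 <= q <= n, so the sums below range over all (p,q) with p >= 0, q >= 1.\<close>
definition E_coeff :: "nat \<Rightarrow> int poly poly" where
  "E_coeff n = (\<Sum>p\<in>{0..n}. \<Sum>q\<in>{1..n}. of_nat (cnt n p q) * monom (monom 1 p) q)"

type_synonym rf = "int poly poly fract"

definition U :: rf where "U = Fract [:[:0, 1:]:] 1"
definition V :: rf where "V = Fract [:0, 1:] 1"

text \<open>E(u,v) as a power series in t.\<close>
definition E_uv :: "rf fps" where
  "E_uv = Abs_fps (\<lambda>n. if n = 0 then 0 else Fract (E_coeff n) 1)"

text \<open>E(1,v): substitute u := 1.\<close>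
definition E_1v :: "rf fps" where
  "E_1v = Abs_fps (\<lambda>n. if n = 0 then 0
            else Fract (map_poly (\<lambda>c. [:poly c 1:]) (E_coeff n)) 1)"

text \<open>E(u,u): substitute v := u.\<close>
definition E_uu :: "rf fps" where
  "E_uu = Abs_fps (\<lambda>n. if n = 0 then 0 else Fract [: poly (E_coeff n) [:0, 1:] :] 1)"

end

(* Deleting the last entry of a sequence in I_(n+1)(>=,>=,-) gives a sequence e in I_n(>=,>=,-),
   and e extends by a last entry x exactly when beta(e) < x <= n.  An entry x <= alpha(e) becomes
   the new beta, an entry x > alpha(e) the new alpha, so in terms of parameters the children of
   (p,q) are (0,q+1), ..., (p-1,q+1) and (p+1,q), (p+2,q-1), ..., (p+q,1).  Summed as monomials
   this is v/(1-u) (v^q - u^p v^q) + v/(1-v/u) (u^(p+q) - u^p v^q), which is linear in u^p v^q and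
   expresses the t^(n+1) coefficient of E(u,v) through E_n(u,v), E_n(1,v) and E_n(u,u); together
   with the single sequence (0) of parameters (1,1) for n = 1 this is the functional equation. *)

theory Submission
  imports Defs "HOL-Computational_Algebra.Polynomial_Factorial"
begin

lemma finite_inv_seqs: "finite (inv_seqs n)"
proof (rule finite_subset)
  show "inv_seqs n \<subseteq> {f. \<forall>i. (i \<in> {1..n} \<longrightarrow> f i \<in> {0..<n}) \<and> (i \<notin> {1..n} \<longrightarrow> f i = 0)}"
  proof (intro subsetI CollectI allI conjI impI)
    fix f i assume f: "f \<in> inv_seqs n"
    show "f i \<in> {0..<n}" if "i \<in> {1..n}"
      using f that unfolding inv_seqs_def by fastforce
    show "f i = 0" if "i \<notin> {1..n}"
      using f that unfolding inv_seqs_def by blast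
  qed
qed (intro finite_set_of_finite_funs; simp)

lemma finite_avoid_geq_geq: "finite (avoid_geq_geq n)"
  using finite_inv_seqs by (rule finite_subset[rotated]) (auto simp: avoid_geq_geq_def)

lemma entry_le_alpha: "i \<in> {1..n} \<Longrightarrow> int (e i) \<le> alpha n e"
  unfolding alpha_def by (rule Max_ge) auto

lemma alpha_attained:
  assumes "n \<ge> 1"
  obtains j where "j \<in> {1..n}" "alpha n e = int (e j)"
proof -
  have "alpha n e \<in> int ` e ` {1..n}"
    unfolding alpha_def using assms by (intro Max_in) auto
  then show thesis using that by blast
qed

lemma alpha_nonneg: "n \<ge> 1 \<Longrightarrow> 0 \<le> alpha n e"
  by (metis alpha_attained of_nat_0_le_iff)

lemma alpha_less:
  assumes "n \<ge> 1" and "e \<in> inv_seqs n"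
  shows "alpha n e < int n"
proof -
  obtain j where "j \<in> {1..n}" "alpha n e = int (e j)"
    using alpha_attained[OF assms(1)] .
  moreover have "e j < j"
    using assms(2) calculation(1) by (simp add: inv_seqs_def)
  ultimately show ?thesis by simp
qed

definition non_ltr_max_values :: "nat \<Rightarrow> (nat \<Rightarrow> nat) \<Rightarrow> int set" where
  "non_ltr_max_values n e = (\<lambda>i. int (e i)) ` {i \<in> {1..n}. \<not> is_ltr_max e i}"

lemma finite_non_ltr_max_values: "finite (non_ltr_max_values n e)"
  unfolding non_ltr_max_values_def by simp

lemma non_ltr_max_values_iff:
  "y \<in> non_ltr_max_values n e \<longleftrightarrow> (\<exists>i j. 1 \<le> i \<and> i < j \<and> j \<le> n \<and> e i \<ge> e j \<and> y = int (e j))"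
proof
  assume "y \<in> non_ltr_max_values n e"
  then obtain j where j: "j \<in> {1..n}" "\<not> is_ltr_max e j" "y = int (e j)"
    unfolding non_ltr_max_values_def by blast
  then obtain i where "i \<in> {1..<j}" "e i \<ge> e j"
    unfolding is_ltr_max_def by (auto simp: not_less)
  with j show "\<exists>i j. 1 \<le> i \<and> i < j \<and> j \<le> n \<and> e i \<ge> e j \<and> y = int (e j)"
    by (intro exI[of _ i] exI[of _ j]) auto
next
  assume "\<exists>i j. 1 \<le> i \<and> i < j \<and> j \<le> n \<and> e i \<ge> e j \<and> y = int (e j)"
  then obtain i j where ij: "1 \<le> i" "i < j" "j \<le> n" "e i \<ge> e j" "y = int (e j)"
    by blast
  then have "\<not> is_ltr_max e j"
    unfolding is_ltr_max_def by (auto simp: not_less)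
  with ij show "y \<in> non_ltr_max_values n e"
    unfolding non_ltr_max_values_def by auto
qed

lemma beta_eq_Max: "beta n e = Max (insert (-1) (non_ltr_max_values n e))"
  unfolding beta_def non_ltr_max_values_def by (rule arg_cong[where f = Max]) auto

lemma beta_ge: "-1 \<le> beta n e"
  unfolding beta_eq_Max using finite_non_ltr_max_values by simp

lemma beta_less_iff: "beta n e < x \<longleftrightarrow> -1 < x \<and> (\<forall>y\<in>non_ltr_max_values n e. y < x)"
  unfolding beta_eq_Max using finite_non_ltr_max_values by simp

lemma beta_le_alpha: "n \<ge> 1 \<Longrightarrow> beta n e \<le> alpha n e"
  unfolding beta_eq_Max
  using finite_non_ltr_max_values alpha_nonneg[of n e] entry_le_alpha[of _ n e]
  by (auto simp: non_ltr_max_values_def)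

lemma inv_seqs_extend: "e \<in> inv_seqs n \<Longrightarrow> x \<le> n \<Longrightarrow> e(Suc n := x) \<in> inv_seqs (Suc n)"
  by (auto simp: inv_seqs_def)

lemma is_ltr_max_extend: "i \<le> n \<Longrightarrow> is_ltr_max (e(Suc n := x)) i = is_ltr_max e i"
  by (auto simp: is_ltr_max_def)

lemma is_ltr_max_extend_last:
  assumes "n \<ge> 1"
  shows "is_ltr_max (e(Suc n := x)) (Suc n) \<longleftrightarrow> alpha n e < int x"
proof
  assume "is_ltr_max (e(Suc n := x)) (Suc n)"
  moreover obtain j where "j \<in> {1..n}" "alpha n e = int (e j)"
    using alpha_attained[OF assms] .
  ultimately show "alpha n e < int x" by (auto simp: is_ltr_max_def)
next
  assume "alpha n e < int x"
  then show "is_ltr_max (e(Suc n := x)) (Suc n)"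
    using entry_le_alpha[of _ n e] by (force simp: is_ltr_max_def)
qed

lemma non_ltr_max_values_extend:
  assumes "n \<ge> 1"
  shows "non_ltr_max_values (Suc n) (e(Suc n := x))
       = non_ltr_max_values n e \<union> (if alpha n e < int x then {} else {int x})"
proof -
  have "{i \<in> {1..Suc n}. \<not> is_ltr_max (e(Suc n := x)) i}
      = {i \<in> {1..n}. \<not> is_ltr_max e i} \<union> (if alpha n e < int x then {} else {Suc n})"
    using is_ltr_max_extend[of _ n e x] is_ltr_max_extend_last[OF assms, of e x] assms
    by (auto simp: le_Suc_eq)
  then show ?thesis
    unfolding non_ltr_max_values_def by auto
qed

lemma alpha_extend:
  assumes "n \<ge> 1"
  shows "alpha (Suc n) (e(Suc n := x)) = max (alpha n e) (int x)"
proof -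
  have "{1..Suc n} = insert (Suc n) {1..n}" and "(e(Suc n := x)) ` {1..n} = e ` {1..n}"
    by auto
  then have "int ` (e(Suc n := x)) ` {1..Suc n} = insert (int x) (int ` e ` {1..n})"
    by (simp only: image_insert fun_upd_same)
  then show ?thesis
    unfolding alpha_def using assms by (simp add: max.commute)
qed

lemma beta_extend:
  assumes "n \<ge> 1" and "beta n e < int x"
  shows "beta (Suc n) (e(Suc n := x)) = (if alpha n e < int x then beta n e else int x)"
proof (cases "alpha n e < int x")
  case False
  have "Max (insert (-1) (insert (int x) (non_ltr_max_values n e))) = int x"
    using assms(2) beta_less_iff finite_non_ltr_max_values by (intro Max_eqI) auto
  then show ?thesis
    using False unfolding beta_eq_Max non_ltr_max_values_extend[OF assms(1)] by simp
qed (simp add: beta_eq_Max non_ltr_max_values_extend[OF assms(1)])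

definition has_geq_geq :: "nat \<Rightarrow> (nat \<Rightarrow> nat) \<Rightarrow> bool" where
  "has_geq_geq n e \<longleftrightarrow> (\<exists>i j k. 1 \<le> i \<and> i < j \<and> j < k \<and> k \<le> n \<and> e i \<ge> e j \<and> e j \<ge> e k)"

lemma avoid_geq_geq_iff: "e \<in> avoid_geq_geq n \<longleftrightarrow> e \<in> inv_seqs n \<and> \<not> has_geq_geq n e"
  unfolding avoid_geq_geq_def has_geq_geq_def by blast

text \<open>A new last entry completes a pattern exactly when some entry that is not a left-to-right
  maximum is at least as large.\<close>
lemma has_geq_geq_extend_iff:
  "has_geq_geq (Suc n) (e(Suc n := x)) \<longleftrightarrow> has_geq_geq n e \<or> \<not> beta n e < int x"
proof -
  let ?f = "e(Suc n := x)"
  have "has_geq_geq (Suc n) ?f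
    \<longleftrightarrow> has_geq_geq n e \<or> (\<exists>i j. 1 \<le> i \<and> i < j \<and> j \<le> n \<and> e i \<ge> e j \<and> e j \<ge> x)"
  proof
    assume "has_geq_geq (Suc n) ?f"
    then obtain i j k where ijk: "1 \<le> i" "i < j" "j < k" "k \<le> Suc n" "?f i \<ge> ?f j" "?f j \<ge> ?f k"
      unfolding has_geq_geq_def by blast
    show "has_geq_geq n e \<or> (\<exists>i j. 1 \<le> i \<and> i < j \<and> j \<le> n \<and> e i \<ge> e j \<and> e j \<ge> x)"
    proof (cases "k = Suc n")
      case True
      with ijk show ?thesis by (intro disjI2 exI[of _ i] exI[of _ j]) auto
    next
      case False
      with ijk show ?thesis
        unfolding has_geq_geq_def by (intro disjI1 exI[of _ i] exI[of _ j] exI[of _ k]) auto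
    qed
  next
    assume "has_geq_geq n e \<or> (\<exists>i j. 1 \<le> i \<and> i < j \<and> j \<le> n \<and> e i \<ge> e j \<and> e j \<ge> x)"
    then show "has_geq_geq (Suc n) ?f"
    proof
      assume "has_geq_geq n e"
      then obtain i j k where "1 \<le> i" "i < j" "j < k" "k \<le> n" "e i \<ge> e j" "e j \<ge> e k"
        unfolding has_geq_geq_def by blast
      then show ?thesis
        unfolding has_geq_geq_def by (intro exI[of _ i] exI[of _ j] exI[of _ k]) auto
    next
      assume "\<exists>i j. 1 \<le> i \<and> i < j \<and> j \<le> n \<and> e i \<ge> e j \<and> e j \<ge> x"
      then obtain i j where "1 \<le> i" "i < j" "j \<le> n" "e i \<ge> e j" "e j \<ge> x"
        by blast
      then show ?thesis
        unfolding has_geq_geq_def by (intro exI[of _ i] exI[of _ j] exI[of _ "Suc n"]) auto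
    qed
  qed
  also have "(\<exists>i j. 1 \<le> i \<and> i < j \<and> j \<le> n \<and> e i \<ge> e j \<and> e j \<ge> x)
    \<longleftrightarrow> (\<exists>y\<in>non_ltr_max_values n e. int x \<le> y)"
  proof
    assume "\<exists>i j. 1 \<le> i \<and> i < j \<and> j \<le> n \<and> e i \<ge> e j \<and> e j \<ge> x"
    then obtain i j where "1 \<le> i" "i < j" "j \<le> n" "e i \<ge> e j" "e j \<ge> x"
      by blast
    then have "int (e j) \<in> non_ltr_max_values n e" and "int x \<le> int (e j)"
      unfolding non_ltr_max_values_iff by auto
    then show "\<exists>y\<in>non_ltr_max_values n e. int x \<le> y" ..
  next
    assume "\<exists>y\<in>non_ltr_max_values n e. int x \<le> y"
    then obtain y where y: "y \<in> non_ltr_max_values n e" "int x \<le> y"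
      by blast
    then obtain i j where "1 \<le> i" "i < j" "j \<le> n" "e i \<ge> e j" "y = int (e j)"
      unfolding non_ltr_max_values_iff by blast
    with y(2) show "\<exists>i j. 1 \<le> i \<and> i < j \<and> j \<le> n \<and> e i \<ge> e j \<and> e j \<ge> x"
      by (intro exI[of _ i] exI[of _ j]) auto
  qed
  also have "\<dots> \<longleftrightarrow> \<not> beta n e < int x"
    unfolding beta_less_iff by (simp add: not_less)
  finally show ?thesis .
qed

lemma avoid_geq_geq_extend_iff:
  assumes "e \<in> inv_seqs n" and "x \<le> n"
  shows "e(Suc n := x) \<in> avoid_geq_geq (Suc n) \<longleftrightarrow> e \<in> avoid_geq_geq n \<and> beta n e < int x"
  using inv_seqs_extend[OF assms] assms(1)
  unfolding avoid_geq_geq_iff has_geq_geq_extend_iff by blast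

lemma bij_betw_extend_avoid_geq_geq:
  "bij_betw (\<lambda>(e, x). e(Suc n := x))
     (SIGMA e:avoid_geq_geq n. {x. beta n e < int x \<and> x \<le> n}) (avoid_geq_geq (Suc n))"
proof (rule bij_betw_byWitness[where f' = "\<lambda>e'. (e'(Suc n := 0), e' (Suc n))"])
  have last_zero: "e (Suc n) = 0" if "e \<in> avoid_geq_geq n" for e
    using that by (simp add: avoid_geq_geq_iff inv_seqs_def)
  show "\<forall>a\<in>SIGMA e:avoid_geq_geq n. {x. beta n e < int x \<and> x \<le> n}.
          (\<lambda>e'. (e'(Suc n := 0), e' (Suc n))) ((\<lambda>(e, x). e(Suc n := x)) a) = a"
    using last_zero by auto
  show "(\<lambda>(e, x). e(Suc n := x)) ` (SIGMA e:avoid_geq_geq n. {x. beta n e < int x \<and> x \<le> n})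
      \<subseteq> avoid_geq_geq (Suc n)"
    using avoid_geq_geq_extend_iff by (auto simp: avoid_geq_geq_iff)
  show "\<forall>a'\<in>avoid_geq_geq (Suc n).
          (\<lambda>(e, x). e(Suc n := x)) ((\<lambda>e'. (e'(Suc n := 0), e' (Suc n))) a') = a'"
    by simp
  show "(\<lambda>e'. (e'(Suc n := 0), e' (Suc n))) ` avoid_geq_geq (Suc n)
      \<subseteq> (SIGMA e:avoid_geq_geq n. {x. beta n e < int x \<and> x \<le> n})"
  proof
    fix p assume "p \<in> (\<lambda>e'. (e'(Suc n := 0), e' (Suc n))) ` avoid_geq_geq (Suc n)"
    then obtain e' where e': "e' \<in> avoid_geq_geq (Suc n)" and p: "p = (e'(Suc n := 0), e' (Suc n))"
      by blast
    then have inv: "e' \<in> inv_seqs (Suc n)"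
      by (simp add: avoid_geq_geq_iff)
    then have restr: "e'(Suc n := 0) \<in> inv_seqs n"
      by (auto simp: inv_seqs_def)
    have "Suc n \<in> {1..Suc n}"
      by simp
    with inv have last: "e' (Suc n) < Suc n"
      unfolding inv_seqs_def by blast
    show "p \<in> (SIGMA e:avoid_geq_geq n. {x. beta n e < int x \<and> x \<le> n})"
      using e' avoid_geq_geq_extend_iff[OF restr, of "e' (Suc n)"] last unfolding p by simp
  qed
qed

lemma sum_avoid_geq_geq_Suc:
  "(\<Sum>e'\<in>avoid_geq_geq (Suc n). f e')
     = (\<Sum>e\<in>avoid_geq_geq n. \<Sum>x | beta n e < int x \<and> x \<le> n. f (e(Suc n := x)))"
proof -
  have "(\<Sum>e'\<in>avoid_geq_geq (Suc n). f e')
      = (\<Sum>(e, x)\<in>(SIGMA e:avoid_geq_geq n. {x. beta n e < int x \<and> x \<le> n}). f (e(Suc n := x)))"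
    using sum.reindex_bij_betw[OF bij_betw_extend_avoid_geq_geq, of f]
    by (simp add: case_prod_unfold)
  also have "\<dots> = (\<Sum>e\<in>avoid_geq_geq n. \<Sum>x | beta n e < int x \<and> x \<le> n. f (e(Suc n := x)))"
    by (rule sum.Sigma[symmetric]) (auto simp: finite_avoid_geq_geq)
  finally show ?thesis .
qed

lemma params_bounds:
  assumes "n \<ge> 1" and "e \<in> inv_seqs n"
  shows "0 \<le> fst (params n e)" "fst (params n e) \<le> int n"
    and "1 \<le> snd (params n e)" "snd (params n e) \<le> int n"
  using alpha_nonneg[OF assms(1)] alpha_less[OF assms] beta_le_alpha[OF assms(1)] beta_ge[of n e]
  by (auto simp: params_def)

definition param_monom :: "nat \<Rightarrow> (nat \<Rightarrow> nat) \<Rightarrow> int poly poly" where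
  "param_monom n e = monom (monom 1 (nat (fst (params n e)))) (nat (snd (params n e)))"

lemma E_coeff_eq_sum_param_monom:
  assumes "n \<ge> 1"
  shows "E_coeff n = (\<Sum>e\<in>avoid_geq_geq n. param_monom n e)"
proof -
  let ?A = "avoid_geq_geq n" and ?T = "{0..n} \<times> {1..n}"
  let ?g = "\<lambda>e. (nat (fst (params n e)), nat (snd (params n e)))"
  have fibre_sum: "(\<Sum>e\<in>{e \<in> ?A. ?g e = pq}. param_monom n e)
      = of_nat (cnt n (fst pq) (snd pq)) * monom (monom 1 (fst pq)) (snd pq)" for pq
  proof -
    obtain p q where pq: "pq = (p, q)"
      by fastforce
    have "{e \<in> ?A. ?g e = (p, q)} = {e \<in> ?A. params n e = (int p, int q)}"
      using params_bounds[OF assms] by (force simp: avoid_geq_geq_iff prod_eq_iff)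
    moreover have "param_monom n e = monom (monom 1 p) q" if "params n e = (int p, int q)" for e
      using that by (simp add: param_monom_def)
    ultimately show ?thesis
      unfolding pq by (simp add: cnt_def)
  qed
  have "E_coeff n = (\<Sum>pq\<in>?T. of_nat (cnt n (fst pq) (snd pq)) * monom (monom 1 (fst pq)) (snd pq))"
    unfolding E_coeff_def by (simp add: sum.cartesian_product case_prod_beta')
  also have "\<dots> = (\<Sum>pq\<in>?T. \<Sum>e\<in>{e \<in> ?A. ?g e = pq}. param_monom n e)"
    by (simp only: fibre_sum)
  also have "\<dots> = (\<Sum>e\<in>?A. param_monom n e)"
  proof (rule sum.group[OF finite_avoid_geq_geq])
    show "?g ` ?A \<subseteq> ?T"
      using params_bounds[OF assms] by (force simp: avoid_geq_geq_iff)
  qed simp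
  finally show ?thesis .
qed

lemma alpha_beta_of_params:
  assumes "n \<ge> 1" and "params n e = (int p, int q)"
  shows "alpha n e = int (n - q)" "beta n e = int (n - q) - int p" "q \<le> n" "p \<le> Suc (n - q)"
proof -
  have "alpha n e = int n - int q" "beta n e = alpha n e - int p"
    using assms(2) by (auto simp: params_def)
  moreover have "0 \<le> alpha n e" "-1 \<le> beta n e"
    using alpha_nonneg[OF assms(1)] beta_ge by auto
  ultimately show "alpha n e = int (n - q)" "beta n e = int (n - q) - int p"
    and "q \<le> n" "p \<le> Suc (n - q)"
    by auto
qed

lemma params_extend_le_alpha:
  assumes "n \<ge> 1" and "params n e = (int p, int q)" and "i < p"
  shows "params (Suc n) (e(Suc n := n - q - i)) = (int i, int (Suc q))"
proof -
  note pp = alpha_beta_of_params[OF assms(1,2)]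
  have x: "int (n - q - i) = alpha n e - int i"
    using pp assms(3) by auto
  then have "beta n e < int (n - q - i)" and "\<not> alpha n e < int (n - q - i)"
    using pp assms(3) by auto
  then have "alpha (Suc n) (e(Suc n := n - q - i)) = alpha n e"
    and "beta (Suc n) (e(Suc n := n - q - i)) = alpha n e - int i"
    using x by (simp_all add: alpha_extend[OF assms(1)] beta_extend[OF assms(1)])
  then show ?thesis
    using pp by (simp add: params_def)
qed

lemma params_extend_gt_alpha:
  assumes "n \<ge> 1" and "params n e = (int p, int q)" and "i < q"
  shows "params (Suc n) (e(Suc n := Suc (n - q + i))) = (int (Suc (p + i)), int (q - i))"
proof -
  note pp = alpha_beta_of_params[OF assms(1,2)]
  have "beta n e < int (Suc (n - q + i))" and "alpha n e < int (Suc (n - q + i))"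
    using pp by auto
  then have "alpha (Suc n) (e(Suc n := Suc (n - q + i))) = int (Suc (n - q + i))"
    and "beta (Suc n) (e(Suc n := Suc (n - q + i))) = beta n e"
    by (simp_all add: alpha_extend[OF assms(1)] beta_extend[OF assms(1)])
  then show ?thesis
    using pp assms(3) by (simp add: params_def)
qed

lemma sum_atLeastAtMost_split_around:
  fixes f :: "nat \<Rightarrow> 'a::comm_monoid_add"
  assumes "p \<le> Suc a"
  shows "(\<Sum>x\<in>{Suc a - p..a + q}. f x) = (\<Sum>i<p. f (a - i)) + (\<Sum>i<q. f (Suc (a + i)))"
proof -
  have "{Suc a - p..a + q} = {Suc a - p..a} \<union> {Suc a..a + q}"
    using assms by auto
  then have "(\<Sum>x\<in>{Suc a - p..a + q}. f x) = (\<Sum>x\<in>{Suc a - p..a}. f x) + (\<Sum>x\<in>{Suc a..a + q}. f x)"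
    by (simp add: sum.union_disjoint)
  moreover have "(\<Sum>x\<in>{Suc a - p..a}. f x) = (\<Sum>i<p. f (a - i))"
    by (rule sum.reindex_bij_witness[where i = "\<lambda>x. a - x" and j = "\<lambda>i. a - i"]) (use assms in auto)
  moreover have "(\<Sum>x\<in>{Suc a..a + q}. f x) = (\<Sum>i<q. f (Suc (a + i)))"
    by (rule sum.reindex_bij_witness[where j = "\<lambda>x. x - Suc a" and i = "\<lambda>i. Suc (a + i)"]) auto
  ultimately show ?thesis
    by simp
qed

lemma sum_param_monom_children:
  assumes "n \<ge> 1" and "params n e = (int p, int q)"
  shows "(\<Sum>x | beta n e < int x \<and> x \<le> n. param_monom (Suc n) (e(Suc n := x)))
       = (\<Sum>i<p. monom (monom 1 i) (Suc q)) + (\<Sum>i<q. monom (monom 1 (Suc (p + i))) (q - i))"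
proof -
  note pp = alpha_beta_of_params[OF assms]
  have "{x. beta n e < int x \<and> x \<le> n} = {Suc (n - q) - p..n - q + q}"
    using pp by auto
  then have "(\<Sum>x | beta n e < int x \<and> x \<le> n. param_monom (Suc n) (e(Suc n := x)))
      = (\<Sum>i<p. param_monom (Suc n) (e(Suc n := n - q - i)))
        + (\<Sum>i<q. param_monom (Suc n) (e(Suc n := Suc (n - q + i))))"
    using sum_atLeastAtMost_split_around[OF pp(4)] by simp
  also have "\<dots> = (\<Sum>i<p. monom (monom 1 i) (Suc q)) + (\<Sum>i<q. monom (monom 1 (Suc (p + i))) (q - i))"
  proof (intro arg_cong2[where f = "(+)"] sum.cong refl)
    fix i
    show "param_monom (Suc n) (e(Suc n := n - q - i)) = monom (monom 1 i) (Suc q)" if "i \<in> {..<p}"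
      unfolding param_monom_def params_extend_le_alpha[OF assms that[unfolded lessThan_iff]]
      by (simp only: fst_conv snd_conv nat_int)
    show "param_monom (Suc n) (e(Suc n := Suc (n - q + i))) = monom (monom 1 (Suc (p + i))) (q - i)"
      if "i \<in> {..<q}"
      unfolding param_monom_def params_extend_gt_alpha[OF assms that[unfolded lessThan_iff]]
      by (simp only: fst_conv snd_conv nat_int)
  qed
  finally show ?thesis .
qed

lemma sum_powers_mult_power_eq:
  fixes u v :: "'a::field"
  assumes "u \<noteq> 1"
  shows "(\<Sum>i<p. u ^ i) * v ^ Suc q = v / (1 - u) * (v ^ q - u ^ p * v ^ q)"
proof -
  have "v ^ q - u ^ p * v ^ q = (1 - u ^ p) * v ^ q"
    by (simp add: algebra_simps)
  also have "\<dots> = (1 - u) * (\<Sum>i<p. u ^ i) * v ^ q"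
    by (simp only: one_diff_power_eq)
  finally show ?thesis
    using assms by simp
qed

lemma sum_power_mult_power_diff_eq:
  fixes u v :: "'a::field"
  assumes "u \<noteq> 0" and "u \<noteq> v"
  shows "(\<Sum>i<q. u ^ Suc (p + i) * v ^ (q - i)) = v / (1 - v / u) * (u ^ (p + q) - u ^ p * v ^ q)"
proof -
  have "v / (1 - v / u) * (u ^ (p + q) - u ^ p * v ^ q)
      = v * u / (u - v) * (u ^ p * (u ^ q - v ^ q))"
    using assms by (simp add: field_simps power_add)
  also have "\<dots> = v * u / (u - v) * (u ^ p * ((u - v) * (\<Sum>i<q. v ^ (q - Suc i) * u ^ i)))"
    by (simp only: power_diff_sumr2)
  also have "\<dots> = (\<Sum>i<q. v * u * u ^ p * (v ^ (q - Suc i) * u ^ i))"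
    using assms by (simp add: sum_distrib_left mult.assoc)
  also have "\<dots> = (\<Sum>i<q. u ^ Suc (p + i) * v ^ (q - i))"
    by (rule sum.cong) (auto simp: power_add Suc_diff_Suc[symmetric])
  finally show ?thesis ..
qed

lemma to_fract_power: "to_fract (x ^ k) = to_fract x ^ k"
  by (induction k) simp_all

lemma U_eq: "U = to_fract [:[:0, 1:]:]" and V_eq: "V = to_fract [:0, 1:]"
  by (simp_all add: U_def V_def to_fract_def)

lemma U_ne_0: "U \<noteq> 0" and U_ne_1: "U \<noteq> 1" and U_ne_V: "U \<noteq> V"
  unfolding U_eq V_eq to_fract_1[symmetric] to_fract_eq_iff by (simp_all add: one_pCons)

lemma to_fract_monom_monom: "to_fract (monom (monom 1 p) q) = U ^ p * V ^ q"
proof -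
  have "monom (monom (1::int) p) q = [:[:0, 1:]:] ^ p * [:0, 1:] ^ q"
    by (simp add: monom_altdef poly_const_pow)
  then show ?thesis
    by (simp add: U_eq V_eq to_fract_power)
qed

definition subst_u_one :: "int poly poly \<Rightarrow> rf" where
  "subst_u_one a = to_fract (map_poly (\<lambda>c. [:poly c 1:]) a)"

definition subst_v_u :: "int poly poly \<Rightarrow> rf" where
  "subst_v_u a = to_fract [:poly a [:0, 1:]:]"

lemma subst_u_one_add: "subst_u_one (a + b) = subst_u_one a + subst_u_one b"
proof -
  have "map_poly (\<lambda>c. [:poly c 1:]) (a + b)
      = map_poly (\<lambda>c. [:poly c 1:]) a + map_poly (\<lambda>c. [:poly c 1:]) b"
    by (rule poly_eqI) (simp add: coeff_map_poly)
  then show ?thesis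
    unfolding subst_u_one_def by (metis to_fract_add)
qed

lemma subst_v_u_add: "subst_v_u (a + b) = subst_v_u a + subst_v_u b"
proof -
  have "[:poly (a + b) [:0, 1:]:] = [:poly a [:0, 1:]:] + [:poly b [:0, 1:]:]"
    by simp
  then show ?thesis
    unfolding subst_v_u_def by (metis to_fract_add)
qed

lemma subst_u_one_sum: "subst_u_one (sum f A) = (\<Sum>x\<in>A. subst_u_one (f x))"
  by (rule sum_comp_morphism[symmetric, unfolded comp_def])
    (simp_all add: subst_u_one_add, simp add: subst_u_one_def)

lemma subst_v_u_sum: "subst_v_u (sum f A) = (\<Sum>x\<in>A. subst_v_u (f x))"
  by (rule sum_comp_morphism[symmetric, unfolded comp_def])
    (simp_all add: subst_v_u_add, simp add: subst_v_u_def)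

lemma subst_u_one_monom_monom: "subst_u_one (monom (monom 1 p) q) = V ^ q"
proof -
  have "map_poly (\<lambda>c. [:poly c 1:]) (monom (monom (1::int) p) q) = monom [:poly (monom 1 p) 1:] q"
    by (rule map_poly_monom) simp
  also have "\<dots> = [:0, 1:] ^ q"
    by (simp add: poly_monom monom_altdef pCons_one)
  finally have "map_poly (\<lambda>c. [:poly c 1:]) (monom (monom (1::int) p) q) = [:0, 1:] ^ q" .
  then show ?thesis
    by (simp add: subst_u_one_def V_eq to_fract_power)
qed

lemma subst_v_u_monom_monom: "subst_v_u (monom (monom 1 p) q) = U ^ (p + q)"
proof -
  have "[:poly (monom (monom (1::int) p) q) [:0, 1:]:] = [:[:0, 1:]:] ^ (p + q)"
    by (simp add: poly_monom monom_altdef power_add poly_const_pow)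
  then show ?thesis
    by (simp add: subst_v_u_def U_eq to_fract_power)
qed

text \<open>A polynomial z stands for a multiset of parameters (p,q), as a sum of monomials u^p v^q;
  children_gf z is the generating function of all their children in the generating tree.\<close>
definition children_gf :: "int poly poly \<Rightarrow> rf" where
  "children_gf z = V / (1 - U) * (subst_u_one z - to_fract z)
                 + V / (1 - V / U) * (subst_v_u z - to_fract z)"

lemma children_gf_sum: "children_gf (sum f A) = (\<Sum>x\<in>A. children_gf (f x))"
  unfolding children_gf_def subst_u_one_sum subst_v_u_sum to_fract_sum
  by (simp only: sum.distrib sum_distrib_left[symmetric] sum_subtractf)

lemma children_gf_monom_monom:
  "children_gf (monom (monom 1 p) q)
     = to_fract ((\<Sum>i<p. monom (monom 1 i) (Suc q)) + (\<Sum>i<q. monom (monom 1 (Suc (p + i))) (q - i)))"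
proof -
  have "to_fract ((\<Sum>i<p. monom (monom 1 i) (Suc q)) + (\<Sum>i<q. monom (monom 1 (Suc (p + i))) (q - i)))
      = (\<Sum>i<p. U ^ i) * V ^ Suc q + (\<Sum>i<q. U ^ Suc (p + i) * V ^ (q - i))"
    by (simp add: to_fract_monom_monom sum_distrib_right)
  also have "\<dots> = children_gf (monom (monom 1 p) q)"
    unfolding children_gf_def to_fract_monom_monom subst_u_one_monom_monom subst_v_u_monom_monom
      sum_powers_mult_power_eq[OF U_ne_1] sum_power_mult_power_diff_eq[OF U_ne_0 U_ne_V]
    ..
  finally show ?thesis ..
qed

lemma to_fract_E_coeff_Suc:
  assumes "n \<ge> 1"
  shows "to_fract (E_coeff (Suc n)) = children_gf (E_coeff n)"
proof -
  have children: "to_fract (\<Sum>x | beta n e < int x \<and> x \<le> n. param_monom (Suc n) (e(Suc n := x)))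
      = children_gf (param_monom n e)" if "e \<in> avoid_geq_geq n" for e
  proof -
    define p q where "p = nat (fst (params n e))" and "q = nat (snd (params n e))"
    have "e \<in> inv_seqs n"
      using that by (simp add: avoid_geq_geq_iff)
    then have pq: "params n e = (int p, int q)"
      using params_bounds[OF assms, of e] by (simp add: p_def q_def prod_eq_iff)
    then have monom: "param_monom n e = monom (monom 1 p) q"
      by (simp add: param_monom_def)
    show ?thesis
      unfolding sum_param_monom_children[OF assms pq] monom children_gf_monom_monom ..
  qed
  have "to_fract (E_coeff (Suc n))
      = (\<Sum>e\<in>avoid_geq_geq n.
           to_fract (\<Sum>x | beta n e < int x \<and> x \<le> n. param_monom (Suc n) (e(Suc n := x))))"
    by (simp only: E_coeff_eq_sum_param_monom[of "Suc n", simplified] sum_avoid_geq_geq_Suc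
        to_fract_sum)
  also have "\<dots> = (\<Sum>e\<in>avoid_geq_geq n. children_gf (param_monom n e))"
    using children by (rule sum.cong[OF refl])
  also have "\<dots> = children_gf (E_coeff n)"
    by (simp only: children_gf_sum E_coeff_eq_sum_param_monom[OF assms])
  finally show ?thesis .
qed

lemma avoid_geq_geq_one: "avoid_geq_geq 1 = {\<lambda>_. 0}"
  by (auto simp: avoid_geq_geq_def inv_seqs_def fun_eq_iff) metis

lemma to_fract_E_coeff_one: "to_fract (E_coeff 1) = U * V"
proof -
  have "non_ltr_max_values 1 (\<lambda>_. 0) = {}"
    by (auto simp: non_ltr_max_values_def is_ltr_max_def)
  then have "alpha 1 (\<lambda>_. 0) = 0" and "beta 1 (\<lambda>_. 0) = -1"
    by (simp_all add: alpha_def beta_eq_Max)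
  then have "param_monom 1 (\<lambda>_. 0) = monom (monom 1 1) 1"
    by (simp add: param_monom_def params_def)
  then show ?thesis
    unfolding E_coeff_eq_sum_param_monom[OF order_refl] avoid_geq_geq_one
    by (simp add: to_fract_monom_monom)
qed

unbundle fps_syntax

lemma E_uv_nth: "E_uv $ k = (if k = 0 then 0 else to_fract (E_coeff k))"
  and E_1v_nth: "E_1v $ k = (if k = 0 then 0 else subst_u_one (E_coeff k))"
  and E_uu_nth: "E_uu $ k = (if k = 0 then 0 else subst_v_u (E_coeff k))"
  by (simp_all add: E_uv_def E_1v_def E_uu_def to_fract_def subst_u_one_def subst_v_u_def)

lemma fps_X_const_mult_nth:
  fixes c :: "'a::comm_ring_1"
  shows "(fps_X * fps_const c * f) $ n = (if n = 0 then 0 else c * f $ (n - 1))"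
  by (subst mult.assoc) (simp only: fps_X_mult_nth fps_mult_left_const_nth)

theorem proposition2p3:
  shows "(1 + fps_X * fps_const (V / (1 - U)) + fps_X * fps_const (V / (1 - V / U))) * E_uv
       = fps_X * fps_const (U * V) + fps_X * fps_const (V / (1 - U)) * E_1v
         + fps_X * fps_const (V / (1 - V / U)) * E_uu"
proof (rule fps_ext)
  fix m
  consider "m = 0" | "m = 1" | n where "m = Suc n" "n \<ge> 1"
    by (cases m; cases "m - 1") auto
  then show "((1 + fps_X * fps_const (V / (1 - U)) + fps_X * fps_const (V / (1 - V / U))) * E_uv) $ m
      = (fps_X * fps_const (U * V) + fps_X * fps_const (V / (1 - U)) * E_1v
         + fps_X * fps_const (V / (1 - V / U)) * E_uu) $ m"
  proof cases
    case 3
    then show ?thesis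
      using to_fract_E_coeff_Suc[OF 3(2)]
      by (simp add: distrib_right fps_X_const_mult_nth E_uv_nth E_1v_nth E_uu_nth children_gf_def)
        (simp add: algebra_simps diff_divide_distrib)
  qed (simp_all add: distrib_right fps_X_const_mult_nth E_uv_nth E_1v_nth E_uu_nth
      to_fract_E_coeff_one[unfolded One_nat_def])
qed

end
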